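(* Suppose the execution of MaxHedge with parameters $s>1$ and $\rho$ is valid, and an online algorithm ALG with responses $P_j$ is cautious in every round up to and including round $i$ (with $i$ in the domain of MaxHedge). Let $\mathrm{ALG}'$ be the algorithm that responds with $Z_1,\dots,Z_{i-1}$ in rounds $1,\dots,i-1$ and with $P_i$ in round $i$. Then $\mathrm{ALG}(\mathbf X_i;\alpha)\ge\mathrm{ALG}'(\mathbf X_i;\alpha)$.
   Context: Fix $\alpha\in(0,\pi/4]$. A drone at $(t_x,t_y)$, $t_y\ge0$, covers $[t_x-t_y\tan\alpha,t_x+t_y\tan\alpha]$ on the $x$-axis; $\mathrm{FC}(X_0,\dots,X_i)$ denotes the set of positions covering $X_0,\dots,X_i$. Fix $s>1$ and the requests $X_0=(0,0)$, $X_i=(2(-s)^{i-1},0)$ for $i\ge1$; $\mathbf X_i=(X_0,\dots,X_i)$. Let $T_i$ be the apex of $\mathrm{FC}(X_0,\dots,X_i)$: $T_0=X_0$, $T_1=(1,\cot\alpha)$, $T_i=((-s)^{i-2}(1-s),\ s^{i-2}(1+s)\cot\alpha)$ for $i\ge2$. Let $o_i=|X_0T_i|$, the optimal offline cost for $\mathbf X_i$ ($o_0=0$). MaxHedge with parameter $\rho>0$: $Z_0=X_0$; for $i\ge1$, $Z_i=T_i+z_i(T_{i+1}-T_i)$ with $z_i\ge0$ is the intersection of the halfline from $T_i$ through $T_{i+1}$ with the circle centred at $Z_{i-1}$ of radius $\rho(o_i-o_{i-1})$; if no such point exists, MaxHedge fails in round $i$. Its domain is $\{0,\dots,i-1\}$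 if it fails in round $i$, and all rounds otherwise. The execution is valid if for every round $i\ge1$ in the domain, $Z_i$ lies on the same side of the $y$-axis as $T_i$. An online algorithm ALG responds with $P_0=X_0$ and $P_i\in\mathrm{FC}(X_0,\dots,X_i)$ chosen knowing only $X_0,\dots,X_i$; its cost on $\mathbf X_i$ is $\mathrm{ALG}(\mathbf X_i;\alpha)=\sum_{j=0}^{i-1}|P_jP_{j+1}|$. ALG is cautious in round $j$ if $P_j$ lies in the closed disk centred at $Z_{j-1}$ of radius $|Z_{j-1}Z_j|$. *)

theory Defs
  imports "HOL-Analysis.Analysis"
begin

type_synonym pt = "real \<times> real"

definition req :: "real \<Rightarrow> nat \<Rightarrow> pt" where
  "req s i = (if i = 0 then (0, 0) else (2 * (- s) ^ (i - 1), 0))"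

text \<open>Positions covering X_0..X_i (drone at (tx,ty), ty >= 0, covers [tx - ty tan a, tx + ty tan a]).\<close>
definition FC :: "real \<Rightarrow> real \<Rightarrow> nat \<Rightarrow> pt set" where
  "FC \<alpha> s i = {(tx, ty). ty \<ge> 0 \<and>
      (\<forall>j\<le>i. tx - ty * tan \<alpha> \<le> fst (req s j) \<and> fst (req s j) \<le> tx + ty * tan \<alpha>)}"

text \<open>Apex T_i of FC(X_0..X_i).\<close>
definition apex :: "real \<Rightarrow> real \<Rightarrow> nat \<Rightarrow> pt" where
  "apex \<alpha> s i = (if i = 0 then (0, 0)
     else if i = 1 then (1, cot \<alpha>)
     else ((- s) ^ (i - 2) * (1 - s), s ^ (i - 2) * (1 + s) * cot \<alpha>))"

text \<open>Optimal offline cost o_i = |X_0 T_i|.\<close>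
definition opt :: "real \<Rightarrow> real \<Rightarrow> nat \<Rightarrow> real" where
  "opt \<alpha> s i = dist (req s 0) (apex \<alpha> s i)"

definition mh_step :: "real \<Rightarrow> real \<Rightarrow> real \<Rightarrow> pt \<Rightarrow> nat \<Rightarrow> pt \<Rightarrow> bool" where
  "mh_step \<alpha> s \<rho> zprev i p \<longleftrightarrow>
     (\<exists>z\<ge>0. p = apex \<alpha> s i + z *\<^sub>R (apex \<alpha> s (Suc i) - apex \<alpha> s i)) \<and>
     dist zprev p = \<rho> * (opt \<alpha> s i - opt \<alpha> s (i - 1))"

definition mh_exec :: "real \<Rightarrow> real \<Rightarrow> real \<Rightarrow> (nat \<Rightarrow> pt) \<Rightarrow> bool" where
  "mh_exec \<alpha> s \<rho> Z \<longleftrightarrow> Z 0 = req s 0 \<and>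
     (\<forall>i\<ge>1. (\<forall>k\<in>{1..<i}. mh_step \<alpha> s \<rho> (Z (k - 1)) k (Z k)) \<and>
             (\<exists>p. mh_step \<alpha> s \<rho> (Z (i - 1)) i p)
             \<longrightarrow> mh_step \<alpha> s \<rho> (Z (i - 1)) i (Z i))"

definition mh_dom :: "real \<Rightarrow> real \<Rightarrow> real \<Rightarrow> (nat \<Rightarrow> pt) \<Rightarrow> nat \<Rightarrow> bool" where
  "mh_dom \<alpha> s \<rho> Z i \<longleftrightarrow> (\<forall>k\<in>{1..i}. mh_step \<alpha> s \<rho> (Z (k - 1)) k (Z k))"

definition mh_valid :: "real \<Rightarrow> real \<Rightarrow> real \<Rightarrow> (nat \<Rightarrow> pt) \<Rightarrow> bool" where
  "mh_valid \<alpha> s \<rho> Z \<longleftrightarrow>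
     (\<forall>i\<ge>1. mh_dom \<alpha> s \<rho> Z i \<longrightarrow> sgn (fst (Z i)) = sgn (fst (apex \<alpha> s i)))"

definition cost :: "(nat \<Rightarrow> pt) \<Rightarrow> nat \<Rightarrow> real" where
  "cost P i = (\<Sum>j<i. dist (P j) (P (Suc j)))"

definition cautious :: "(nat \<Rightarrow> pt) \<Rightarrow> (nat \<Rightarrow> pt) \<Rightarrow> nat \<Rightarrow> bool" where
  "cautious Z P j \<longleftrightarrow> dist (Z (j - 1)) (P j) \<le> dist (Z (j - 1)) (Z j)"

end

theory Submission
  imports Defs
begin

text \<open>
  It suffices to exchange one response at a time: in every round k,
  |Z_(k-1) Z_k| + |Z_k P_(k+1)| <= |Z_(k-1) P_k| + |P_k P_(k+1)|,
  and these exchange inequalities telescope.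

  For the exchange, pass to oblique coordinates in which the boundary lines of the cones FC
  are coordinate lines, and then to an orthonormal frame (tangent, normal) of the boundary
  line through Z_k. In that frame u = Z_k - Z_(k-1) and v = P_(k+1) - Z_k lie in the closed
  first quadrant, v flatter than u because P_(k+1) is cautious; w = P_k - Z_k points into
  the cone, and cautiousness of P_k puts it into the second quadrant. Then, by
  Cauchy-Schwarz, |u + w| + |v - w| >= |u| + |v| + <u/|u| - v/|v|, w> >= |u| + |v|.
  The bound \<alpha> <= pi/4, i.e. tan \<alpha> <= 1, is what keeps u and v in the first quadrant.
\<close>

lemma norm_add_norm_le_norm_add_norm_diff:
  fixes u v w :: "'a::real_inner"
  assumes "u \<noteq> 0 \<Longrightarrow> v \<noteq> 0 \<Longrightarrow> 0 \<le> inner (sgn u - sgn v) w"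
  shows "norm u + norm v \<le> norm (u + w) + norm (v - w)"
proof (cases "u = 0 \<or> v = 0")
  case True
  then show ?thesis
    using norm_triangle_ineq[of w "v - w"] norm_triangle_ineq[of "u + w" "- w"] by auto
next
  case False
  have inner_sgn_self: "inner (sgn x) x = norm x" for x :: 'a
    by (cases "x = 0") (simp_all add: sgn_div_norm power2_norm_eq_inner [symmetric] power2_eq_square)
  have "norm u + inner (sgn u) w = inner (sgn u) (u + w)"
    by (simp add: inner_add_right inner_sgn_self)
  also have "\<dots> \<le> norm (u + w)"
    using norm_cauchy_schwarz[of "sgn u" "u + w"] False by (simp add: norm_sgn)
  finally have "norm u + inner (sgn u) w \<le> norm (u + w)" .
  moreover have "norm v - inner (sgn v) w = inner (sgn v) (v - w)"
    by (simp add: inner_diff_right inner_sgn_self)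
  moreover have "\<dots> \<le> norm (v - w)"
    using norm_cauchy_schwarz[of "sgn v" "v - w"] False by (simp add: norm_sgn)
  ultimately show ?thesis
    using assms False by (simp add: inner_diff_left)
qed

lemma power2_norm_prod: "(norm p)\<^sup>2 = (fst p)\<^sup>2 + (snd p)\<^sup>2" for p :: "real \<times> real"
  by (cases p) (simp add: norm_Pair)

lemma first_quadrant_sgn_le:
  fixes u v :: "real \<times> real"
  assumes "u \<noteq> 0" "v \<noteq> 0" "0 \<le> fst u" "0 \<le> snd u" "0 \<le> fst v" "0 \<le> snd v"
    and "snd v * fst u \<le> snd u * fst v"
  shows "fst (sgn u) \<le> fst (sgn v)" and "snd (sgn v) \<le> snd (sgn u)"
proof -
  have cross: "(fst u * snd v)\<^sup>2 \<le> (fst v * snd u)\<^sup>2"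
    using assms by (intro power_mono) (auto simp: mult.commute)
  have "(fst u * norm v)\<^sup>2 \<le> (fst v * norm u)\<^sup>2" "(snd v * norm u)\<^sup>2 \<le> (snd u * norm v)\<^sup>2"
    using cross by (simp_all add: power_mult_distrib power2_norm_prod algebra_simps)
  then have "fst u * norm v \<le> fst v * norm u" "snd v * norm u \<le> snd u * norm v"
    using assms by (auto intro!: power2_le_imp_le)
  moreover have "0 < norm u" "0 < norm v"
    using assms by auto
  moreover have "fst (sgn x) = fst x / norm x" "snd (sgn x) = snd x / norm x" for x :: "real \<times> real"
    by (simp_all add: sgn_div_norm divide_inverse_commute)
  ultimately show "fst (sgn u) \<le> fst (sgn v)" "snd (sgn v) \<le> snd (sgn u)"
    by (simp_all add: field_simps)
qed

lemma norm_detour_le: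
  fixes u v w :: "real \<times> real"
  assumes "0 \<le> fst u" "0 \<le> snd u" "0 \<le> fst v" "0 \<le> snd v"
    and "snd v * fst u \<le> snd u * fst v" and "0 \<le> snd w"
    and "norm (u + w) \<le> norm u"
  shows "norm u + norm v \<le> norm (u + w) + norm (v - w)"
proof (cases "w = 0")
  case False
  have "(norm (u + w))\<^sup>2 \<le> (norm u)\<^sup>2"
    using assms(7) by (simp add: power_mono)
  then have "2 * (fst u * fst w) + (2 * (snd u * snd w) + (norm w)\<^sup>2) \<le> 0"
    by (simp add: power2_norm_eq_inner inner_add_left inner_add_right inner_commute
        inner_prod_def algebra_simps)
  moreover have "0 \<le> snd u * snd w" "0 < (norm w)\<^sup>2"
    using assms False by simp_all
  ultimately have "fst w \<le> 0"
    using assms(1) by (smt (verit) mult_nonneg_nonneg)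
  have "0 \<le> inner (sgn u - sgn v) w" if "u \<noteq> 0" "v \<noteq> 0"
  proof -
    have "fst (sgn u) - fst (sgn v) \<le> 0" "0 \<le> snd (sgn u) - snd (sgn v)"
      using first_quadrant_sgn_le[OF that assms(1-5)] by simp_all
    then show ?thesis
      using \<open>fst w \<le> 0\<close> assms(6)
      by (simp add: inner_prod_def add_nonneg_nonneg mult_nonpos_nonpos mult_nonneg_nonneg)
  qed
  then show ?thesis
    by (rule norm_add_norm_le_norm_add_norm_diff)
qed simp

definition alt_sign :: "nat \<Rightarrow> real" where
  "alt_sign k = (-1) ^ Suc k"

text \<open>
  With c = tan \<alpha>, the cone FC \<alpha> s k is bounded by level lines of sum_coord c k and of
  diff_coord c k; alt_sign k orients the x-axis towards the request X_k.
\<close>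

definition sum_coord :: "real \<Rightarrow> nat \<Rightarrow> pt \<Rightarrow> real" where
  "sum_coord c k p = alt_sign k * fst p + c * snd p"

definition diff_coord :: "real \<Rightarrow> nat \<Rightarrow> pt \<Rightarrow> real" where
  "diff_coord c k p = alt_sign k * fst p - c * snd p"

text \<open>Tangent and normal coordinates of the level lines of sum_coord c k, scaled by sqrt (1 + c^2).\<close>

definition frame :: "real \<Rightarrow> nat \<Rightarrow> pt \<Rightarrow> pt" where
  "frame c k p = (snd p - c * (alt_sign k * fst p), sum_coord c k p)"

lemma alt_sign_Suc: "alt_sign (Suc k) = - alt_sign k"
  by (simp add: alt_sign_def)

lemma alt_sign_cases: "alt_sign k = 1 \<or> alt_sign k = -1"
  by (simp add: alt_sign_def minus_one_power_iff)

lemma sum_coord_Suc: "sum_coord c (Suc k) p = - diff_coord c k p"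
  by (simp add: sum_coord_def diff_coord_def alt_sign_Suc)

lemma diff_coord_Suc: "diff_coord c (Suc k) p = - sum_coord c k p"
  by (simp add: sum_coord_def diff_coord_def alt_sign_Suc)

lemma sum_coord_add_diff_coord: "sum_coord c k p + diff_coord c k p = 2 * (alt_sign k * fst p)"
  by (simp add: sum_coord_def diff_coord_def)

lemma sum_coord_diff [simp]: "sum_coord c k (p - q) = sum_coord c k p - sum_coord c k q"
  by (simp add: sum_coord_def algebra_simps)

lemma diff_coord_diff [simp]: "diff_coord c k (p - q) = diff_coord c k p - diff_coord c k q"
  by (simp add: diff_coord_def algebra_simps)

lemma sum_coord_ray:
  "sum_coord c k (p + z *\<^sub>R (q - p)) = sum_coord c k p + z * (sum_coord c k q - sum_coord c k p)"
  by (simp add: sum_coord_def algebra_simps)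

lemma diff_coord_ray:
  "diff_coord c k (p + z *\<^sub>R (q - p)) = diff_coord c k p + z * (diff_coord c k q - diff_coord c k p)"
  by (simp add: diff_coord_def algebra_simps)

lemma frame_diff: "frame c k p - frame c k q = frame c k (p - q)"
  by (simp add: frame_def sum_coord_def algebra_simps)

lemma snd_frame [simp]: "snd (frame c k p) = sum_coord c k p"
  by (simp add: frame_def)

lemma fst_frame:
  "2 * c * fst (frame c k p) = (1 - c\<^sup>2) * sum_coord c k p - (1 + c\<^sup>2) * diff_coord c k p"
  by (simp add: frame_def sum_coord_def diff_coord_def power2_eq_square algebra_simps)

lemma norm_frame: "norm (frame c k p) = sqrt (1 + c\<^sup>2) * norm p"
proof -
  define \<xi> where "\<xi> = alt_sign k * fst p"
  have "(norm (frame c k p))\<^sup>2 = (snd p - c * \<xi>)\<^sup>2 + (\<xi> + c * snd p)\<^sup>2"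
    by (simp add: frame_def sum_coord_def \<xi>_def power2_norm_prod)
  also have "\<dots> = (1 + c\<^sup>2) * (\<xi>\<^sup>2 + (snd p)\<^sup>2)"
    by (simp add: power2_eq_square algebra_simps)
  also have "\<xi>\<^sup>2 = (fst p)\<^sup>2"
    using alt_sign_cases[of k] by (auto simp: \<xi>_def power_mult_distrib)
  finally have "(norm (frame c k p))\<^sup>2 = (1 + c\<^sup>2) * (norm p)\<^sup>2"
    by (simp add: power2_norm_prod)
  then show ?thesis
    by (metis norm_ge_zero real_sqrt_mult real_sqrt_unique real_sqrt_power)
qed

lemma fst_frame_nonneg:
  assumes "0 < c" "c \<le> 1" "0 \<le> sum_coord c k p" "diff_coord c k p \<le> 0"
  shows "0 \<le> fst (frame c k p)"
proof -
  have "0 \<le> (1 - c\<^sup>2) * sum_coord c k p - (1 + c\<^sup>2) * diff_coord c k p"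
  proof -
    have "0 \<le> (1 - c\<^sup>2) * sum_coord c k p"
      using assms by (simp add: power_le_one)
    moreover have "(1 + c\<^sup>2) * diff_coord c k p \<le> 0"
      using assms(4) by (simp add: mult_nonneg_nonpos)
    ultimately show ?thesis
      by linarith
  qed
  then have "0 \<le> 2 * c * fst (frame c k p)"
    unfolding fst_frame .
  then show ?thesis
    using assms(1) by (simp add: zero_le_mult_iff)
qed

lemma frame_cross_le:
  assumes "0 < c" "sum_coord c k p * diff_coord c k q \<le> sum_coord c k q * diff_coord c k p"
  shows "snd (frame c k q) * fst (frame c k p) \<le> snd (frame c k p) * fst (frame c k q)"
proof -
  have "2 * c * (snd (frame c k q) * fst (frame c k p) - snd (frame c k p) * fst (frame c k q))
      = sum_coord c k q * (2 * c * fst (frame c k p)) - sum_coord c k p * (2 * c * fst (frame c k q))"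
    by (simp add: algebra_simps)
  also have "\<dots> = (1 + c\<^sup>2) * (sum_coord c k p * diff_coord c k q - sum_coord c k q * diff_coord c k p)"
    unfolding fst_frame by (simp add: algebra_simps)
  also have "\<dots> \<le> 0"
    using assms(2) by (intro mult_nonneg_nonpos) simp_all
  finally show ?thesis
    using assms(1) by (simp add: mult_le_0_iff)
qed

lemma power2_norm_sum_diff_coord:
  "(2 * c * norm p)\<^sup>2 = (1 + c\<^sup>2) * ((sum_coord c k p)\<^sup>2 + (diff_coord c k p)\<^sup>2)
      - 2 * (1 - c\<^sup>2) * (sum_coord c k p * diff_coord c k p)"
proof -
  define \<xi> where "\<xi> = alt_sign k * fst p"
  have "\<xi>\<^sup>2 = (fst p)\<^sup>2"
    using alt_sign_cases[of k] by (auto simp: \<xi>_def power_mult_distrib)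
  then have "(2 * c * norm p)\<^sup>2 = 4 * c\<^sup>2 * (\<xi>\<^sup>2 + (snd p)\<^sup>2)"
    by (simp add: power_mult_distrib power2_norm_prod)
  also have "\<dots> = (1 + c\<^sup>2) * ((\<xi> + c * snd p)\<^sup>2 + (\<xi> - c * snd p)\<^sup>2)
      - 2 * (1 - c\<^sup>2) * ((\<xi> + c * snd p) * (\<xi> - c * snd p))"
    by (simp add: power2_eq_square algebra_simps)
  finally show ?thesis
    by (simp add: sum_coord_def diff_coord_def \<xi>_def)
qed

lemma norm_less_of_coords:
  assumes "0 < c" "c \<le> 1"
    and "0 \<le> sum_coord c k p" "sum_coord c k p < sum_coord c k q"
    and "diff_coord c k q \<le> diff_coord c k p" "diff_coord c k p \<le> 0"
  shows "norm p < norm q"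
proof -
  have "(sum_coord c k p)\<^sup>2 < (sum_coord c k q)\<^sup>2"
    using assms by (simp add: power_strict_mono)
  moreover have "(diff_coord c k p)\<^sup>2 \<le> (diff_coord c k q)\<^sup>2"
    using assms by (simp add: abs_le_square_iff [symmetric])
  moreover have "sum_coord c k q * diff_coord c k q \<le> sum_coord c k p * diff_coord c k p"
    using assms by (smt (verit) mult_mono mult_minus_right)
  moreover have "0 \<le> 1 - c\<^sup>2"
    using assms by (simp add: power_le_one)
  ultimately have "(2 * c * norm p)\<^sup>2 < (2 * c * norm q)\<^sup>2"
    unfolding power2_norm_sum_diff_coord [where k = k]
    by (smt (verit) add_pos_nonneg mult_left_mono mult_strict_left_mono zero_le_power2)
  then have "2 * c * norm p < 2 * c * norm q"
    by (rule power_less_imp_less_base) (use assms(1) in simp)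
  then show ?thesis
    using assms(1) by simp
qed

lemma oblique_cross_le:
  fixes a a' b sA dB sQ dQ :: real
  assumes "b \<le> a" "a \<le> a'" "sA \<le> b" "- a \<le> dB" "dB \<le> - b" "a \<le> sQ" "sQ \<le> a'" "dQ \<le> - a'"
  shows "(a - sA) * (dQ - dB) \<le> (dB + b) * (sQ - a)"
proof -
  have "(a - b) * (dB + a') \<le> (a - sA) * (dB - dQ)"
    using assms by (intro mult_mono) auto
  moreover have "(a - b) * (dB + a') - (a' - a) * (- b - dB) = (a + dB) * (a' - b)"
    by (simp add: algebra_simps)
  moreover have "0 \<le> (a + dB) * (a' - b)"
    using assms by simp
  moreover have "(sQ - a) * (- b - dB) \<le> (a' - a) * (- b - dB)"
    using assms by (intro mult_right_mono) auto
  moreover have "(dB + b) * (sQ - a) - (a - sA) * (dQ - dB) = (a - sA) * (dB - dQ) - (sQ - a) * (- b - dB)"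
    by (simp add: algebra_simps)
  ultimately show ?thesis
    by linarith
qed

lemma dist_detour_le:
  fixes A B C P Q :: pt
  assumes c: "0 < c" "c \<le> 1" and ab: "b \<le> a" "a \<le> a'"
    and A: "diff_coord c k A = - b" "sum_coord c k A + diff_coord c k A \<le> 0"
    and B: "sum_coord c k B = a" "diff_coord c k B \<le> - b" "0 \<le> sum_coord c k B + diff_coord c k B"
    and C: "diff_coord c k C = - a'" "a \<le> sum_coord c k C" "sum_coord c k C + diff_coord c k C \<le> 0"
    and P: "a \<le> sum_coord c k P"
    and Q: "a \<le> sum_coord c k Q" "diff_coord c k Q \<le> - a'"
    and cautious: "dist A P \<le> dist A B" "dist B Q \<le> dist B C"
  shows "dist A B + dist B Q \<le> dist A P + dist P Q"
proof -
  have sum_Q_le: "sum_coord c k Q \<le> sum_coord c k C"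
  proof (rule ccontr)
    assume "\<not> ?thesis"
    then have "norm (C - B) < norm (Q - B)"
      using c B C Q by (intro norm_less_of_coords[of c k]) auto
    then show False
      using cautious(2) by (simp add: dist_norm norm_minus_commute)
  qed
  define u v w where "u = frame c k (B - A)" and "v = frame c k (Q - B)" and "w = frame c k (P - B)"
  have uw: "u + w = frame c k (P - A)" and vw: "v - w = frame c k (Q - P)"
    unfolding u_def v_def w_def by (simp_all add: frame_diff [symmetric])
  have "norm u + norm v \<le> norm (u + w) + norm (v - w)"
  proof (rule norm_detour_le)
    show "0 \<le> fst u" "0 \<le> snd u"
      using c ab A B unfolding u_def by (auto intro!: fst_frame_nonneg)
    show "0 \<le> fst v" "0 \<le> snd v"
      using c ab B Q unfolding v_def by (auto intro!: fst_frame_nonneg)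
    show "0 \<le> snd w"
      using B P unfolding w_def by simp
    have "sum_coord c k A \<le> b" "sum_coord c k C \<le> a'"
      using A C by linarith+
    then have "(a - sum_coord c k A) * (diff_coord c k Q - diff_coord c k B)
        \<le> (diff_coord c k B + b) * (sum_coord c k Q - a)"
      using ab B Q sum_Q_le by (intro oblique_cross_le) auto
    then show "snd v * fst u \<le> snd u * fst v"
      unfolding u_def v_def using A(1) B(1) by (intro frame_cross_le[OF c(1)]) (simp add: mult.commute)
    show "norm (u + w) \<le> norm u"
      using cautious(1) unfolding uw unfolding u_def norm_frame
      by (simp add: dist_norm norm_minus_commute mult_left_mono)
  qed
  then have "norm (frame c k (B - A)) + norm (frame c k (Q - B))
      \<le> norm (frame c k (P - A)) + norm (frame c k (Q - P))"
    unfolding uw vw by (simp add: u_def v_def)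
  then have "sqrt (1 + c\<^sup>2) * (dist A B + dist B Q) \<le> sqrt (1 + c\<^sup>2) * (dist A P + dist P Q)"
    by (simp add: norm_frame dist_norm norm_minus_commute algebra_simps)
  then show ?thesis
    by (simp add: mult_le_cancel_left_pos add_pos_nonneg)
qed

definition req_norm :: "real \<Rightarrow> nat \<Rightarrow> real" where
  "req_norm s k = (if k = 0 then 0 else 2 * s ^ (k - 1))"

lemma req_norm_less_Suc: "1 < s \<Longrightarrow> req_norm s k < req_norm s (Suc k)"
  by (cases k) (simp_all add: req_norm_def)

lemma neg_one_power_mult_neg_power: "(-1) ^ m * (- s) ^ m = (s::real) ^ m"
  by (simp add: power_mult_distrib [symmetric])

lemma alt_sign_mult_req: "alt_sign k * fst (req s k) = req_norm s k"
  by (cases k) (simp_all add: alt_sign_def req_def req_norm_def neg_one_power_mult_neg_power)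

lemma apex_coords:
  assumes "0 < \<alpha>" "\<alpha> < pi / 2" "1 \<le> k"
  shows "sum_coord (tan \<alpha>) k (apex \<alpha> s k) = req_norm s k"
    and "diff_coord (tan \<alpha>) k (apex \<alpha> s k) = - req_norm s (k - 1)"
proof -
  have tan_cot: "tan \<alpha> * cot \<alpha> = 1"
    using assms tan_gt_zero[of \<alpha>] by (simp add: cot_altdef)
  consider "k = 1" | m where "k = Suc (Suc m)"
    using assms(3) by (metis One_nat_def Suc_le_D not0_implies_Suc)
  then have "sum_coord (tan \<alpha>) k (apex \<alpha> s k) = req_norm s k
      \<and> diff_coord (tan \<alpha>) k (apex \<alpha> s k) = - req_norm s (k - 1)"
  proof cases
    case 1
    then show ?thesis
      by (simp add: sum_coord_def diff_coord_def alt_sign_def apex_def req_norm_def tan_cot)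
  next
    case (2 m)
    have "alt_sign k * fst (apex \<alpha> s k) = - ((-1) ^ m * (- s) ^ m) * (1 - s)"
      by (simp add: 2 alt_sign_def apex_def)
    then have x: "alt_sign k * fst (apex \<alpha> s k) = s ^ m * s - s ^ m"
      by (simp add: neg_one_power_mult_neg_power algebra_simps)
    have "tan \<alpha> * snd (apex \<alpha> s k) = (tan \<alpha> * cot \<alpha>) * (s ^ m * (1 + s))"
      by (simp add: 2 apex_def)
    then have y: "tan \<alpha> * snd (apex \<alpha> s k) = s ^ m + s ^ m * s"
      unfolding tan_cot by (simp add: algebra_simps)
    show ?thesis
      unfolding sum_coord_def diff_coord_def x y by (simp add: 2 req_norm_def)
  qed
  then show "sum_coord (tan \<alpha>) k (apex \<alpha> s k) = req_norm s k"
    and "diff_coord (tan \<alpha>) k (apex \<alpha> s k) = - req_norm s (k - 1)"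
    by simp_all
qed

lemma sum_coord_ge_of_FC:
  assumes "p \<in> FC \<alpha> s j" "k \<le> j"
  shows "req_norm s k \<le> sum_coord (tan \<alpha>) k p"
proof -
  have "fst p - snd p * tan \<alpha> \<le> fst (req s k)" "fst (req s k) \<le> fst p + snd p * tan \<alpha>"
    using assms by (auto simp: FC_def)
  then show ?thesis
    using alt_sign_cases[of k] alt_sign_mult_req[of k s]
    by (auto simp: sum_coord_def algebra_simps)
qed

lemma mh_step_coords:
  assumes "0 < \<alpha>" "\<alpha> < pi / 2" "1 < s" "1 \<le> j" "mh_step \<alpha> s \<rho> z j p"
  shows "sum_coord (tan \<alpha>) j p = req_norm s j"
    and "diff_coord (tan \<alpha>) j p \<le> - req_norm s (j - 1)"
proof -
  obtain t where "0 \<le> t" and p: "p = apex \<alpha> s j + t *\<^sub>R (apex \<alpha> s (Suc j) - apex \<alpha> s j)"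
    using assms(5) by (auto simp: mh_step_def)
  have "sum_coord (tan \<alpha>) j (apex \<alpha> s (Suc j)) = req_norm s j"
    using apex_coords(2)[OF assms(1,2), of "Suc j" s] by (simp add: diff_coord_Suc)
  then show "sum_coord (tan \<alpha>) j p = req_norm s j"
    using apex_coords(1)[OF assms(1,2,4)] by (simp add: p sum_coord_ray)
  have "diff_coord (tan \<alpha>) j (apex \<alpha> s (Suc j)) = - req_norm s (Suc j)"
    using apex_coords(1)[OF assms(1,2), of "Suc j" s] by (simp add: sum_coord_Suc)
  moreover have "req_norm s (j - 1) \<le> req_norm s (Suc j)"
    using req_norm_less_Suc[OF assms(3), of "j - 1"] req_norm_less_Suc[OF assms(3), of j] assms(4)
    by simp
  ultimately show "diff_coord (tan \<alpha>) j p \<le> - req_norm s (j - 1)"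
    using apex_coords(2)[OF assms(1,2,4)] \<open>0 \<le> t\<close>
    by (simp add: p diff_coord_ray mult_nonneg_nonpos)
qed

lemma mh_coords:
  assumes "0 < \<alpha>" "\<alpha> < pi / 2" "1 < s"
    and "mh_exec \<alpha> s \<rho> Z" "mh_valid \<alpha> s \<rho> Z" "mh_dom \<alpha> s \<rho> Z i" "j \<le> i"
  shows "sum_coord (tan \<alpha>) j (Z j) = req_norm s j"
    and "diff_coord (tan \<alpha>) j (Z j) \<le> - req_norm s (j - 1)"
    and "0 \<le> alt_sign j * fst (Z j)"
proof -
  consider "j = 0" | "1 \<le> j"
    by linarith
  \<comment> \<open>For j = 0 the middle claim is 0 <= 0, since 0 - 1 = 0 and req_norm s 0 = 0.\<close>
  then have "sum_coord (tan \<alpha>) j (Z j) = req_norm s j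
      \<and> diff_coord (tan \<alpha>) j (Z j) \<le> - req_norm s (j - 1) \<and> 0 \<le> alt_sign j * fst (Z j)"
  proof cases
    case 1
    then show ?thesis
      using assms(4) by (simp add: mh_exec_def req_def req_norm_def sum_coord_def diff_coord_def)
  next
    case 2
    have "mh_dom \<alpha> s \<rho> Z j"
      using assms(6,7) by (auto simp: mh_dom_def)
    then have step: "mh_step \<alpha> s \<rho> (Z (j - 1)) j (Z j)"
      and sgn_eq: "sgn (fst (Z j)) = sgn (fst (apex \<alpha> s j))"
      using 2 assms(5) by (auto simp: mh_dom_def mh_valid_def)
    have "2 * (alt_sign j * fst (apex \<alpha> s j)) = req_norm s j - req_norm s (j - 1)"
      using apex_coords[OF assms(1,2) 2, of s] sum_coord_add_diff_coord[of "tan \<alpha>" j "apex \<alpha> s j"]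
      by linarith
    then have "0 < alt_sign j * fst (apex \<alpha> s j)"
      using req_norm_less_Suc[OF assms(3), of "j - 1"] 2 by simp
    then have "0 < alt_sign j * fst (Z j)"
      using sgn_eq by (metis sgn_mult sgn_pos sgn_greater)
    then show ?thesis
      using mh_step_coords[OF assms(1-3) 2 step] by simp
  qed
  then show "sum_coord (tan \<alpha>) j (Z j) = req_norm s j"
    and "diff_coord (tan \<alpha>) j (Z j) \<le> - req_norm s (j - 1)"
    and "0 \<le> alt_sign j * fst (Z j)"
    by simp_all
qed

lemma mh_detour_le:
  assumes "0 < \<alpha>" "\<alpha> \<le> pi / 4" "1 < s"
    and "mh_exec \<alpha> s \<rho> Z" "mh_valid \<alpha> s \<rho> Z" "mh_dom \<alpha> s \<rho> Z i"
    and FC: "\<forall>j. P j \<in> FC \<alpha> s j" and cautious: "\<forall>j\<in>{1..i}. cautious Z P j"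
    and k: "k = Suc m" "k < i"
  shows "dist (Z m) (Z k) + dist (Z k) (P (Suc k)) \<le> dist (Z m) (P k) + dist (P k) (P (Suc k))"
proof -
  define c where "c = tan \<alpha>"
  have \<alpha>: "\<alpha> < pi / 2"
    using assms(2) pi_gt_zero by linarith
  have c: "0 < c" "c \<le> 1"
    using assms(1,2) \<alpha> tan_mono_le[of \<alpha> "pi / 4"] by (simp_all add: c_def tan_gt_zero tan_45)
  note Z = mh_coords[OF assms(1) \<alpha> assms(3-6), folded c_def]
  show ?thesis
  proof (rule dist_detour_le[OF c, of "req_norm s m" "req_norm s k" "req_norm s (Suc k)"])
    show "req_norm s m \<le> req_norm s k" "req_norm s k \<le> req_norm s (Suc k)"
      using req_norm_less_Suc[OF assms(3)] k(1) by (simp_all add: less_imp_le)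
    show "diff_coord c k (Z m) = - req_norm s m"
      using Z(1)[of m] k by (simp add: diff_coord_Suc)
    show "sum_coord c k (Z m) + diff_coord c k (Z m) \<le> 0"
      using Z(3)[of m] k by (simp add: sum_coord_add_diff_coord alt_sign_Suc)
    show "sum_coord c k (Z k) = req_norm s k" "diff_coord c k (Z k) \<le> - req_norm s m"
      using Z(1,2)[of k] k by simp_all
    show "0 \<le> sum_coord c k (Z k) + diff_coord c k (Z k)"
      using Z(3)[of k] k by (simp only: sum_coord_add_diff_coord) simp
    have C: "sum_coord c (Suc k) (Z (Suc k)) = req_norm s (Suc k)"
      "diff_coord c (Suc k) (Z (Suc k)) \<le> - req_norm s k" "0 \<le> alt_sign (Suc k) * fst (Z (Suc k))"
      using Z[of "Suc k"] k(2) by simp_all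
    show "diff_coord c k (Z (Suc k)) = - req_norm s (Suc k)"
      using C(1) sum_coord_Suc[of c k "Z (Suc k)"] by linarith
    show "req_norm s k \<le> sum_coord c k (Z (Suc k))"
      using C(2) diff_coord_Suc[of c k "Z (Suc k)"] by linarith
    show "sum_coord c k (Z (Suc k)) + diff_coord c k (Z (Suc k)) \<le> 0"
      using C(3) by (simp add: sum_coord_add_diff_coord alt_sign_Suc)
    show "req_norm s k \<le> sum_coord c k (P k)" "req_norm s k \<le> sum_coord c k (P (Suc k))"
      using FC sum_coord_ge_of_FC[of "P k" \<alpha> s k k] sum_coord_ge_of_FC[of "P (Suc k)" \<alpha> s "Suc k" k]
      unfolding c_def by simp_all
    show "diff_coord c k (P (Suc k)) \<le> - req_norm s (Suc k)"
      using FC sum_coord_ge_of_FC[of "P (Suc k)" \<alpha> s "Suc k" "Suc k"]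
      by (simp add: c_def sum_coord_Suc)
    show "dist (Z m) (P k) \<le> dist (Z m) (Z k)" "dist (Z k) (P (Suc k)) \<le> dist (Z k) (Z (Suc k))"
      using cautious[rule_format, of k] cautious[rule_format, of "Suc k"] k
      by (simp_all add: cautious_def)
  qed
qed

lemma cost_prefix_le:
  fixes Z P :: "nat \<Rightarrow> pt"
  assumes "Z 0 = P 0"
    and detour: "\<And>m. Suc m < i \<Longrightarrow>
      dist (Z m) (Z (Suc m)) + dist (Z (Suc m)) (P (Suc (Suc m)))
        \<le> dist (Z m) (P (Suc m)) + dist (P (Suc m)) (P (Suc (Suc m)))"
  shows "cost (\<lambda>j. if j < i then Z j else P i) i \<le> cost P i"
proof (cases i)
  case (Suc n)
  have "cost Z m + dist (Z m) (P (Suc m)) \<le> cost P (Suc m)" if "m \<le> n" for m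
    using that
  proof (induction m)
    case 0
    then show ?case
      using assms(1) by (simp add: cost_def)
  next
    case (Suc m)
    then have "cost Z m + dist (Z m) (P (Suc m)) \<le> cost P (Suc m)"
      by simp
    moreover have "dist (Z m) (Z (Suc m)) + dist (Z (Suc m)) (P (Suc (Suc m)))
        \<le> dist (Z m) (P (Suc m)) + dist (P (Suc m)) (P (Suc (Suc m)))"
      using Suc.prems \<open>i = Suc n\<close> by (intro detour) simp
    ultimately show ?case
      by (simp add: cost_def)
  qed
  moreover have "cost (\<lambda>j. if j < i then Z j else P i) i = cost Z n + dist (Z n) (P (Suc n))"
    by (simp add: Suc cost_def)
  ultimately show ?thesis
    using Suc by simp
qed (simp add: cost_def)

theorem lemma13:
  fixes \<alpha> s \<rho> :: real and Z P :: "nat \<Rightarrow> real \<times> real" and i :: nat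
  assumes "0 < \<alpha>" and "\<alpha> \<le> pi / 4" and "s > 1" and "\<rho> > 0"
    and "mh_exec \<alpha> s \<rho> Z" and "mh_valid \<alpha> s \<rho> Z"
    and "mh_dom \<alpha> s \<rho> Z i"
    and "P 0 = req s 0" and "\<forall>j. P j \<in> FC \<alpha> s j"
    and "\<forall>j\<in>{1..i}. cautious Z P j"
  shows "cost P i \<ge> cost (\<lambda>j. if j < i then Z j else P i) i"
proof (rule cost_prefix_le)
  show "Z 0 = P 0"
    using assms(5,8) by (simp add: mh_exec_def)
  show "dist (Z m) (Z (Suc m)) + dist (Z (Suc m)) (P (Suc (Suc m)))
      \<le> dist (Z m) (P (Suc m)) + dist (P (Suc m)) (P (Suc (Suc m)))" if "Suc m < i" for m
    using mh_detour_le[OF assms(1-3,5-7,9,10) refl that] .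
qed

end
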